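(* Let $(D,v^* )$ be a neighbor-acyclic instance of TFP (so $|V(D)|$ is a power of two) such that $D$ has no source. Let $A=N_{\mathrm{out}}(v^* )$ and $B=N_{\mathrm{in}}(v^* )$. If (1) $|A|\ge |V(D)|/3$ and (2) for every $b\in B$, $\mathrm{out}(b)\le \frac{|B|}{|A|}\,\mathrm{out}(v^* )$ (equivalently $\mathrm{out}(b)\le |B|$), then $(D,v^* )$ is a yes-instance.
   Context: A tournament is a digraph with exactly one arc between every pair of distinct vertices; $(u,v)$ means $u$ beats $v$. TFP: given a tournament $D$ with $|V(D)|$ a power of two and a player $v^*$, decide whether there is a seeding of a balanced knockout tournament (complete binary tree with $|V(D)|$ leaves, in each round sibling winners play and the winner according to $D$ advances) under which $v^*$ is the champion; if so the instance is a yes-instance. $\mathrm{out}(v)=|N_{\mathrm{out}}(v)|$ is the out-degree in $D$. An instance $(D,v^* )$ is neighbor-acyclic if $D[N_{\mathrm{in}}(v^* )]$ and $D[N_{\mathrm{out}}(v^* )]$ are both acyclic. A source is a vertex of in-degree $0$. *)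

theory Defs
  imports Complex_Main
begin

definition tournament :: "'a set \<Rightarrow> ('a \<Rightarrow> 'a \<Rightarrow> bool) \<Rightarrow> bool" where
  "tournament V beats \<longleftrightarrow> finite V \<and>
     (\<forall>u\<in>V. \<not> beats u u) \<and>
     (\<forall>u\<in>V. \<forall>v\<in>V. u \<noteq> v \<longrightarrow> (beats u v \<longleftrightarrow> \<not> beats v u))"

definition out_nbrs :: "'a set \<Rightarrow> ('a \<Rightarrow> 'a \<Rightarrow> bool) \<Rightarrow> 'a \<Rightarrow> 'a set" where
  "out_nbrs V beats v = {u \<in> V. beats v u}"

definition in_nbrs :: "'a set \<Rightarrow> ('a \<Rightarrow> 'a \<Rightarrow> bool) \<Rightarrow> 'a \<Rightarrow> 'a set" where
  "in_nbrs V beats v = {u \<in> V. beats u v}"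

definition out_deg :: "'a set \<Rightarrow> ('a \<Rightarrow> 'a \<Rightarrow> bool) \<Rightarrow> 'a \<Rightarrow> nat" where
  "out_deg V beats v = card (out_nbrs V beats v)"

definition induced_arcs :: "('a \<Rightarrow> 'a \<Rightarrow> bool) \<Rightarrow> 'a set \<Rightarrow> ('a \<times> 'a) set" where
  "induced_arcs beats S = {(u, w). u \<in> S \<and> w \<in> S \<and> beats u w}"

definition neighbor_acyclic :: "'a set \<Rightarrow> ('a \<Rightarrow> 'a \<Rightarrow> bool) \<Rightarrow> 'a \<Rightarrow> bool" where
  "neighbor_acyclic V beats v \<longleftrightarrow>
     acyclic (induced_arcs beats (in_nbrs V beats v)) \<and>
     acyclic (induced_arcs beats (out_nbrs V beats v))"

definition is_source :: "'a set \<Rightarrow> ('a \<Rightarrow> 'a \<Rightarrow> bool) \<Rightarrow> 'a \<Rightarrow> bool" where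
  "is_source V beats v \<longleftrightarrow> in_nbrs V beats v = {}"

text \<open>Winner of a balanced knockout tournament with 2^k leaves, seeded by the list xs
  (leaves left to right); in each round sibling winners play, the winner per beats advances.\<close>
fun ko_winner :: "('a \<Rightarrow> 'a \<Rightarrow> bool) \<Rightarrow> nat \<Rightarrow> 'a list \<Rightarrow> 'a" where
  "ko_winner beats 0 xs = hd xs"
| "ko_winner beats (Suc k) xs =
     (let a = ko_winner beats k (take (2 ^ k) xs);
          b = ko_winner beats k (drop (2 ^ k) xs)
      in if beats a b then a else b)"

definition yes_instance :: "'a set \<Rightarrow> ('a \<Rightarrow> 'a \<Rightarrow> bool) \<Rightarrow> 'a \<Rightarrow> bool" where
  "yes_instance V beats v \<longleftrightarrow>
     (\<exists>k xs. distinct xs \<and> set xs = V \<and> length xs = 2 ^ k \<and> ko_winner beats k xs = v)"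

end

theory Submission
  imports Defs
begin

text \<open>
  Play the knockout round by round, keeping the following invariant (admissible) on the field S
  of remaining players, where A and B are the out- and in-neighbours of v in S: at least a third
  of S lies in A, and every b in B beats at most as many players of A as there are players of B
  beating b.  As D[A] and D[B] are acyclic tournaments they are transitive, so B can be listed by
  strength, and the invariant says that the i-th strongest player of B is beaten by at least
  |A| - i players of A.  A round is scheduled so that v beats a player of A, the k strongest
  players of B beat the k weakest, x players of A (chosen greedily) knock out the x middle
  players of B, and the rest of A is paired off internally.  For suitable k and x the winners
  again satisfy the invariant, and a field of one player is {v}.  Initially the invariant is
  hypothesis (1) together with out(b) \<le> |B|, because out(b) \<ge> 1 + |out(b) \<inter> A| + |out(b) \<inter> B|
  and |B| = 1 + |out(b) \<inter> B| + |in(b) \<inter> B|.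
\<close>

definition knockout_winnable :: "('a \<Rightarrow> 'a \<Rightarrow> bool) \<Rightarrow> nat \<Rightarrow> 'a set \<Rightarrow> 'a \<Rightarrow> bool" where
  "knockout_winnable beats m S v \<longleftrightarrow>
     (\<exists>xs. distinct xs \<and> set xs = S \<and> length xs = 2 ^ m \<and> ko_winner beats m xs = v)"

lemma yes_instance_iff_knockout_winnable:
  "yes_instance V beats v \<longleftrightarrow> (\<exists>k. knockout_winnable beats k V v)"
  by (auto simp: yes_instance_def knockout_winnable_def)

definition interleave :: "('a \<Rightarrow> 'a) \<Rightarrow> 'a list \<Rightarrow> 'a list" where
  "interleave p ys = concat (map (\<lambda>w. [w, p w]) ys)"

lemma length_interleave [simp]: "length (interleave p ys) = 2 * length ys"
  by (induction ys) (auto simp: interleave_def)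

lemma set_interleave: "set (interleave p ys) = set ys \<union> p ` set ys"
  by (auto simp: interleave_def)

lemma take_interleave: "take (2 * k) (interleave p ys) = interleave p (take k ys)"
proof (induction ys arbitrary: k)
  case (Cons y ys)
  then show ?case by (cases k) (auto simp: interleave_def)
qed (simp add: interleave_def)

lemma drop_interleave: "drop (2 * k) (interleave p ys) = interleave p (drop k ys)"
proof (induction ys arbitrary: k)
  case (Cons y ys)
  then show ?case by (cases k) (auto simp: interleave_def)
qed (simp add: interleave_def)

lemma ko_winner_interleave:
  assumes "length ys = 2 ^ m" and "\<forall>w\<in>set ys. beats w (p w)"
  shows "ko_winner beats (Suc m) (interleave p ys) = ko_winner beats m ys"
  using assms
proof (induction m arbitrary: ys)
  case 0
  then obtain w where "ys = [w]" by (auto simp: length_Suc_conv)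
  with 0 show ?case by (simp add: interleave_def)
next
  case (Suc m)
  have "take (2 ^ Suc m) (interleave p ys) = interleave p (take (2 ^ m) ys)"
    and "drop (2 ^ Suc m) (interleave p ys) = interleave p (drop (2 ^ m) ys)"
    using take_interleave[of "2 ^ m"] drop_interleave[of "2 ^ m"] by simp_all
  moreover have "ko_winner beats (Suc m) (interleave p (take (2 ^ m) ys))
      = ko_winner beats m (take (2 ^ m) ys)"
    using Suc.prems by (intro Suc.IH) (auto dest: in_set_takeD)
  moreover have "ko_winner beats (Suc m) (interleave p (drop (2 ^ m) ys))
      = ko_winner beats m (drop (2 ^ m) ys)"
    using Suc.prems by (intro Suc.IH) (auto dest: in_set_dropD)
  ultimately show ?case
    by (simp only: ko_winner.simps(2))
qed

lemma knockout_winnable_round: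
  assumes distinct: "distinct (map fst ps @ map snd ps)"
    and wins: "\<forall>(w, l)\<in>set ps. beats w l"
    and "knockout_winnable beats m (fst ` set ps) v"
  shows "knockout_winnable beats (Suc m) (fst ` set ps \<union> snd ` set ps) v"
proof -
  obtain ys where ys: "distinct ys" "set ys = fst ` set ps" "length ys = 2 ^ m"
    "ko_winner beats m ys = v"
    using assms(3) by (auto simp: knockout_winnable_def)
  define p where "p w = the (map_of ps w)" for w
  have p: "p w = l" if "(w, l) \<in> set ps" for w l
    using that distinct map_of_eq_Some_iff[of ps] by (simp add: p_def)
  have p_in: "(w, p w) \<in> set ps" if "w \<in> fst ` set ps" for w
    using that p by force
  have opponents: "p ` fst ` set ps = snd ` set ps"
    using p p_in by force
  define xs where "xs = interleave p ys"
  have set_xs: "set xs = fst ` set ps \<union> snd ` set ps"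
    using ys(2) opponents by (simp add: xs_def set_interleave)
  have length_xs: "length xs = 2 ^ Suc m"
    using ys(3) by (simp add: xs_def)
  have "length ps = card (fst ` set ps)"
    using distinct distinct_card[of "map fst ps"] by simp
  also have "\<dots> = 2 ^ m"
    using ys(1-3) distinct_card by metis
  finally have "length ps = 2 ^ m" .
  then have "card (set xs) = length xs"
    using set_xs length_xs distinct distinct_card[OF distinct] by (simp add: image_Un[symmetric])
  then have "distinct xs"
    by (rule card_distinct)
  moreover have "\<forall>w\<in>set ys. beats w (p w)"
  proof
    fix w
    assume "w \<in> set ys"
    then have "(w, p w) \<in> set ps"
      using ys(2) p_in by simp
    then show "beats w (p w)"
      using wins by blast
  qed
  then have "ko_winner beats (Suc m) xs = v"
    using ko_winner_interleave[OF ys(3)] ys(4) by (simp add: xs_def)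
  ultimately show ?thesis
    using set_xs length_xs by (auto simp: knockout_winnable_def)
qed

context
  fixes V :: "'a set" and beats :: "'a \<Rightarrow> 'a \<Rightarrow> bool"
  assumes tournament: "tournament V beats"
begin

lemma tournament_finite: "finite V"
  using tournament by (simp add: tournament_def)

lemma tournament_irrefl: "u \<in> V \<Longrightarrow> \<not> beats u u"
  using tournament by (simp add: tournament_def)

lemma tournament_asym: "u \<in> V \<Longrightarrow> w \<in> V \<Longrightarrow> beats u w \<Longrightarrow> \<not> beats w u"
  using tournament unfolding tournament_def by metis

lemma tournament_total: "u \<in> V \<Longrightarrow> w \<in> V \<Longrightarrow> u \<noteq> w \<Longrightarrow> beats u w \<or> beats w u"
  using tournament unfolding tournament_def by metis

lemma card_nbrs_notin:
  assumes "X \<subseteq> V" and "u \<in> V" and "u \<notin> X"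
  shows "card X = card (out_nbrs X beats u) + card (in_nbrs X beats u)"
proof -
  have "X = out_nbrs X beats u \<union> in_nbrs X beats u"
    using assms tournament_total by (auto simp: out_nbrs_def in_nbrs_def)
  moreover have "out_nbrs X beats u \<inter> in_nbrs X beats u = {}"
    using assms tournament_asym by (auto simp: out_nbrs_def in_nbrs_def)
  moreover have "finite X"
    using assms(1) tournament_finite finite_subset by blast
  ultimately show ?thesis
    by (metis card_Un_disjoint finite_Un)
qed

lemma card_nbrs_in:
  assumes "X \<subseteq> V" and "u \<in> X"
  shows "card X = Suc (card (out_nbrs X beats u) + card (in_nbrs X beats u))"
proof -
  have "out_nbrs (X - {u}) beats u = out_nbrs X beats u"
    and "in_nbrs (X - {u}) beats u = in_nbrs X beats u"
    using assms tournament_irrefl by (auto simp: out_nbrs_def in_nbrs_def)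
  moreover have "finite X"
    using assms(1) tournament_finite by (rule finite_subset)
  then have "card X = Suc (card (X - {u}))"
    using card_Suc_Diff1 assms(2) by metis
  moreover have
    "card (X - {u}) = card (out_nbrs (X - {u}) beats u) + card (in_nbrs (X - {u}) beats u)"
    using assms by (intro card_nbrs_notin) auto
  ultimately show ?thesis
    by simp
qed

lemma acyclic_sorted_list_exists:
  assumes "X \<subseteq> V" and "acyclic (induced_arcs beats X)"
  shows "\<exists>xs. distinct xs \<and> set xs = X \<and> sorted_wrt beats xs"
  using finite_subset[OF assms(1) tournament_finite] assms
proof (induction X rule: finite_psubset_induct)
  case (psubset X)
  show ?case
  proof (cases "X = {}")
    case True
    then show ?thesis
      by (intro exI[of _ "[]"]) simp
  next
    case False
    have "finite (X \<times> X)"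
      using psubset.hyps by simp
    moreover have "induced_arcs beats X \<subseteq> X \<times> X"
      by (auto simp: induced_arcs_def)
    ultimately have "wf (induced_arcs beats X)"
      using finite_acyclic_wf[OF _ psubset.prems(2)] finite_subset by blast
    then obtain z where z: "z \<in> X" and z_min: "\<And>y. (y, z) \<in> induced_arcs beats X \<Longrightarrow> y \<notin> X"
      using wfE_min' False by blast
    have z_beats: "beats z y" if y: "y \<in> X - {z}" for y
    proof -
      have "(y, z) \<notin> induced_arcs beats X"
        using y z_min by blast
      then have "\<not> beats y z"
        using y z by (simp add: induced_arcs_def)
      moreover have "y \<in> V" "z \<in> V" "y \<noteq> z"
        using y z psubset.prems(1) by auto
      ultimately show ?thesis
        using tournament_total by blast
    qed
    have "acyclic (induced_arcs beats (X - {z}))"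
      using psubset.prems(2) by (rule acyclic_subset) (auto simp: induced_arcs_def)
    moreover have "X - {z} \<subset> X" "X - {z} \<subseteq> V"
      using z psubset.prems(1) by auto
    ultimately obtain xs where xs: "distinct xs" "set xs = X - {z}" "sorted_wrt beats xs"
      using psubset.IH by blast
    have "distinct (z # xs)" "set (z # xs) = X" "sorted_wrt beats (z # xs)"
      using xs z z_beats by auto
    then show ?thesis
      by blast
  qed
qed

lemma sorted_wrt_nth_beats_iff:
  assumes "sorted_wrt beats xs" and "set xs \<subseteq> V" and "i < length xs" and "j < length xs"
  shows "beats (xs ! j) (xs ! i) \<longleftrightarrow> j < i"
proof
  assume ji: "beats (xs ! j) (xs ! i)"
  have "xs ! i \<in> V" "xs ! j \<in> V"
    using assms nth_mem by blast+
  moreover have "i < j \<Longrightarrow> beats (xs ! i) (xs ! j)"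
    using assms sorted_wrt_nth_less by blast
  ultimately show "j < i"
    using ji tournament_irrefl tournament_asym by (metis linorder_neqE_nat)
next
  assume "j < i"
  then show "beats (xs ! j) (xs ! i)"
    using assms sorted_wrt_nth_less by blast
qed

lemma card_in_nbrs_sorted_nth:
  assumes "sorted_wrt beats xs" and "distinct xs" and "set xs \<subseteq> V" and "i < length xs"
  shows "card (in_nbrs (set xs) beats (xs ! i)) = i"
proof -
  have "in_nbrs (set xs) beats (xs ! i) = (!) xs ` {..<i}"
    using sorted_wrt_nth_beats_iff[OF assms(1,3,4)] assms(4)
    by (auto simp: in_nbrs_def in_set_conv_nth intro: less_trans)
  moreover have "inj_on ((!) xs) {..<i}"
    using assms(2,4) by (auto simp: inj_on_def nth_eq_iff_index_eq)
  ultimately show ?thesis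
    by (simp add: card_image)
qed

end

lemma fst_set_zip: "length xs = length ys \<Longrightarrow> fst ` set (zip xs ys) = set xs"
  by (metis map_fst_zip set_map)

lemma snd_set_zip: "length xs = length ys \<Longrightarrow> snd ` set (zip xs ys) = set ys"
  by (metis map_snd_zip set_map)

fun pairs_of :: "'a list \<Rightarrow> ('a \<times> 'a) list" where
  "pairs_of (a # b # xs) = (a, b) # pairs_of xs"
| "pairs_of _ = []"

lemma length_pairs_of: "length (pairs_of xs) = length xs div 2"
  by (induction xs rule: pairs_of.induct) auto

lemma players_pairs_of:
  "even (length xs) \<Longrightarrow> fst ` set (pairs_of xs) \<union> snd ` set (pairs_of xs) = set xs"
  by (induction xs rule: pairs_of.induct) auto

lemma fst_pairs_of_subset: "fst ` set (pairs_of xs) \<subseteq> set xs"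
  by (induction xs rule: pairs_of.induct) auto

lemma sorted_wrt_pairs_of: "sorted_wrt R xs \<Longrightarrow> (w, l) \<in> set (pairs_of xs) \<Longrightarrow> R w l"
  by (induction xs rule: pairs_of.induct) auto

text \<open>With bs listed strongest first: v meets a, the first k players of bs meet the last k,
  ks!j meets the j-th middle player of bs, and rest is paired off consecutively; the first
  component of each pair is meant to be the winner.\<close>
definition round_schedule ::
    "'a \<Rightarrow> 'a \<Rightarrow> nat \<Rightarrow> 'a list \<Rightarrow> 'a list \<Rightarrow> 'a list \<Rightarrow> ('a \<times> 'a) list" where
  "round_schedule v a k bs ks rest =
     (v, a) # zip (take k bs) (drop (k + length ks) bs)
       @ zip ks (take (length ks) (drop k bs)) @ pairs_of rest"

lemma fst_round_schedule:
  assumes "length bs = 2 * k + length ks"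
  shows "fst ` set (round_schedule v a k bs ks rest)
    = insert v (set (take k bs) \<union> set ks \<union> fst ` set (pairs_of rest))"
  using assms by (auto simp: round_schedule_def image_Un fst_set_zip)

lemma players_round_schedule:
  assumes "length bs = 2 * k + length ks" and "even (length rest)"
  shows "fst ` set (round_schedule v a k bs ks rest) \<union> snd ` set (round_schedule v a k bs ks rest)
    = insert v (insert a (set bs \<union> set ks \<union> set rest))"
proof -
  have "bs = take k bs @ take (length ks) (drop k bs) @ drop (k + length ks) bs"
    by (metis append_take_drop_id drop_drop add.commute)
  then have "set bs
      = set (take k bs) \<union> set (take (length ks) (drop k bs)) \<union> set (drop (k + length ks) bs)"
    by (metis Un_assoc set_append)
  then show ?thesis
    using assms players_pairs_of[OF assms(2)]
    by (auto simp: round_schedule_def image_Un fst_set_zip snd_set_zip)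
qed

lemma length_round_schedule:
  assumes "length bs = 2 * k + length ks" and "even (length rest)"
  shows "2 * length (round_schedule v a k bs ks rest) = 2 + length bs + length ks + length rest"
  using assms by (simp add: round_schedule_def length_pairs_of)

lemma round_schedule_beats:
  assumes "length bs = 2 * k + length ks" and "beats v a"
    and "sorted_wrt beats bs" and "sorted_wrt beats rest"
    and "\<forall>j<length ks. beats (ks ! j) (bs ! (k + j))"
  shows "\<forall>(w, l)\<in>set (round_schedule v a k bs ks rest). beats w l"
proof -
  have "beats w l" if "(w, l) \<in> set (zip (take k bs) (drop (k + length ks) bs))" for w l
  proof -
    have "\<exists>i<k. w = bs ! i \<and> l = bs ! (k + length ks + i)"
      using that assms(1) by (auto simp: set_zip)
    then obtain i where "i < k" "w = bs ! i" "l = bs ! (k + length ks + i)"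
      by blast
    then show ?thesis
      using assms(1,3) sorted_wrt_nth_less by fastforce
  qed
  moreover have "beats w l" if "(w, l) \<in> set (zip ks (take (length ks) (drop k bs)))" for w l
    using that assms(1,5) by (auto simp: set_zip)
  ultimately show ?thesis
    using assms(2,4) sorted_wrt_pairs_of by (fastforce simp: round_schedule_def)
qed

text \<open>Sizes k and x for round_schedule when |A| = al and |B| = be: x < al leaves a player of A
  for v, k + x \<le> al makes the greedy matching possible, and the last conjunct keeps a third of
  the winners in A.\<close>
lemma round_parameters_exist:
  fixes al be :: nat
  assumes "even (1 + al + be)" and "1 + al + be \<le> 3 * al"
  shows "\<exists>k x. be = 2 * k + x \<and> x < al \<and> k + x \<le> al \<and>
           (4 \<le> 1 + al + be \<longrightarrow> k + 2 \<le> al + x)"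
proof (cases "even be")
  case False
  then obtain h where h: "be = 2 * h + 1"
    by (elim oddE)
  have "even al"
    using assms(1) h by simp
  then obtain c where "al = 2 * c"
    by (elim evenE)
  then show ?thesis
    using h assms(2) by (intro exI[of _ h] exI[of _ 1]) presburger
next
  case True
  then obtain h where h: "be = 2 * h"
    by (elim evenE)
  have "odd al"
    using assms(1) h by simp
  then obtain c where c: "al = 2 * c + 1"
    by (elim oddE)
  consider "h = 0" | "h + 2 \<le> al" | "1 \<le> h" "al < h + 2"
    by linarith
  then show ?thesis
  proof cases
    case 1
    then show ?thesis
      using h c by (intro exI[of _ 0] exI[of _ 0]) simp
  next
    case 2
    then show ?thesis
      using h c by (intro exI[of _ h] exI[of _ 0]) simp
  next
    case 3
    then show ?thesis
      using h c assms(2) by (intro exI[of _ "h - 1"] exI[of _ 2]) presburger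
  qed
qed

lemma distinct_choice_exists:
  assumes "\<And>j. j < n \<Longrightarrow> finite (C j) \<and> n - j \<le> card (C j)"
  shows "\<exists>xs. length xs = n \<and> distinct xs \<and> (\<forall>j<n. xs ! j \<in> C j)"
  using assms
proof (induction n arbitrary: C)
  case (Suc n)
  obtain xs where xs: "length xs = n" "distinct xs" "\<forall>j<n. xs ! j \<in> C (Suc j)"
    using Suc.IH[of "\<lambda>j. C (Suc j)"] Suc.prems by fastforce
  have "card (set xs) < card (C 0)"
    using Suc.prems[of 0] xs distinct_card[of xs] by simp
  then obtain x where x: "x \<in> C 0" "x \<notin> set xs"
    by (metis card_mono finite_set not_le subsetI)
  have "\<forall>j<Suc n. (x # xs) ! j \<in> C j"
  proof (intro allI impI)
    fix j
    assume "j < Suc n"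
    then show "(x # xs) ! j \<in> C j"
      using xs(3) x(1) by (cases j) auto
  qed
  then show ?case
    using xs(1,2) x(2) by (intro exI[of _ "x # xs"]) simp
qed simp

lemma out_nbrs_mono: "S \<subseteq> T \<Longrightarrow> out_nbrs S beats v \<subseteq> out_nbrs T beats v"
  by (auto simp: out_nbrs_def)

lemma in_nbrs_mono: "S \<subseteq> T \<Longrightarrow> in_nbrs S beats v \<subseteq> in_nbrs T beats v"
  by (auto simp: in_nbrs_def)

lemma induced_arcs_mono: "S \<subseteq> T \<Longrightarrow> induced_arcs beats S \<subseteq> induced_arcs beats T"
  by (auto simp: induced_arcs_def)

locale neighbor_acyclic_instance =
  fixes V :: "'a set" and beats :: "'a \<Rightarrow> 'a \<Rightarrow> bool" and v :: 'a
  assumes tournament: "tournament V beats"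
    and champion: "v \<in> V"
    and neighbor_acyclic: "neighbor_acyclic V beats v"
begin

lemma acyclic_out_nbrs: "S \<subseteq> V \<Longrightarrow> acyclic (induced_arcs beats (out_nbrs S beats v))"
  using neighbor_acyclic unfolding neighbor_acyclic_def
  by (meson acyclic_subset induced_arcs_mono out_nbrs_mono)

lemma acyclic_in_nbrs: "S \<subseteq> V \<Longrightarrow> acyclic (induced_arcs beats (in_nbrs S beats v))"
  using neighbor_acyclic unfolding neighbor_acyclic_def
  by (meson acyclic_subset induced_arcs_mono in_nbrs_mono)

definition admissible :: "nat \<Rightarrow> 'a set \<Rightarrow> bool" where
  "admissible m S \<longleftrightarrow> S \<subseteq> V \<and> v \<in> S \<and> card S = 2 ^ m \<and>
     (2 \<le> card S \<longrightarrow> card S \<le> 3 * card (out_nbrs S beats v)) \<and>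
     (\<forall>b\<in>in_nbrs S beats v.
        card (out_nbrs (out_nbrs S beats v) beats b) \<le> card (in_nbrs (in_nbrs S beats v) beats b))"

lemma admissible_subset: "admissible n S \<Longrightarrow> S \<subseteq> V"
  by (simp add: admissible_def)

lemma admissible_finite: "admissible n S \<Longrightarrow> finite S"
  using admissible_subset tournament_finite[OF tournament] finite_subset by blast

lemma admissible_rank_bound:
  assumes "admissible n S"
    and "sorted_wrt beats bs" "distinct bs" "set bs = in_nbrs S beats v"
    and "i < length bs"
  shows "card (out_nbrs (out_nbrs S beats v) beats (bs ! i)) \<le> i"
proof -
  have "bs ! i \<in> in_nbrs S beats v"
    using assms(4,5) nth_mem by blast
  then have "card (out_nbrs (out_nbrs S beats v) beats (bs ! i))
      \<le> card (in_nbrs (set bs) beats (bs ! i))"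
    using assms(1,4) by (simp add: admissible_def)
  also have "\<dots> = i"
    using assms(1,4) by (intro card_in_nbrs_sorted_nth[OF tournament assms(2,3) _ assms(5)])
      (auto simp: admissible_def in_nbrs_def)
  finally show ?thesis .
qed

lemma admissible_matching:
  assumes "admissible n S"
    and bs: "sorted_wrt beats bs" "distinct bs" "set bs = in_nbrs S beats v"
    and "k + x \<le> card (out_nbrs S beats v)" and "k + x \<le> length bs"
  obtains ks where "length ks = x" "distinct ks" "set ks \<subseteq> out_nbrs S beats v"
    "\<forall>j<x. beats (ks ! j) (bs ! (k + j))"
proof -
  let ?A = "out_nbrs S beats v"
  have "S \<subseteq> V"
    using assms(1) by (rule admissible_subset)
  have "finite (in_nbrs ?A beats (bs ! (k + j))) \<and> x - j \<le> card (in_nbrs ?A beats (bs ! (k + j)))"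
    if "j < x" for j
  proof
    have b: "bs ! (k + j) \<in> V" "bs ! (k + j) \<notin> ?A"
      using that assms(4,6) \<open>S \<subseteq> V\<close> nth_mem[of "k + j" bs] champion tournament_asym[OF tournament]
      by (auto simp: in_nbrs_def out_nbrs_def)
    have "card ?A
        = card (out_nbrs ?A beats (bs ! (k + j))) + card (in_nbrs ?A beats (bs ! (k + j)))"
      using b \<open>S \<subseteq> V\<close> by (intro card_nbrs_notin[OF tournament]) (auto simp: out_nbrs_def)
    moreover have "card (out_nbrs ?A beats (bs ! (k + j))) \<le> k + j"
      using that assms(6) by (intro admissible_rank_bound[OF assms(1) bs]) simp
    ultimately show "x - j \<le> card (in_nbrs ?A beats (bs ! (k + j)))"
      using assms(5) by linarith
    show "finite (in_nbrs ?A beats (bs ! (k + j)))"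
      using admissible_finite[OF assms(1)]
      by (rule finite_subset[rotated]) (auto simp: in_nbrs_def out_nbrs_def)
  qed
  then obtain ks where "length ks = x" "distinct ks"
    "\<forall>j<x. ks ! j \<in> in_nbrs ?A beats (bs ! (k + j))"
    using distinct_choice_exists[of x "\<lambda>j. in_nbrs ?A beats (bs ! (k + j))"] by blast
  then show ?thesis
    by (intro that) (auto simp: in_nbrs_def in_set_conv_nth)
qed

lemma admissible_winners:
  assumes "admissible n S"
    and bs: "sorted_wrt beats bs" "distinct bs" "set bs = in_nbrs S beats v"
    and W: "W \<subseteq> S" "v \<in> W" "card W = 2 ^ m" "in_nbrs W beats v = set (take k bs)"
    and "k \<le> length bs" and "2 \<le> card W \<Longrightarrow> 3 * k + 3 \<le> 2 * card W"
  shows "admissible m W"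
proof -
  have "S \<subseteq> V"
    using assms(1) by (rule admissible_subset)
  have "card W = Suc (card (out_nbrs W beats v) + k)"
    using card_nbrs_in[OF tournament, of W v] W \<open>S \<subseteq> V\<close> assms(9) bs(2)
    by (simp add: distinct_card)
  then have "2 \<le> card W \<longrightarrow> card W \<le> 3 * card (out_nbrs W beats v)"
    using assms(10) by linarith
  moreover have
    "card (out_nbrs (out_nbrs W beats v) beats b) \<le> card (in_nbrs (in_nbrs W beats v) beats b)"
    if "b \<in> in_nbrs W beats v" for b
  proof -
    have "b \<in> set (take k bs)"
      using that W(4) by simp
    then obtain i where "i < length (take k bs)" "b = take k bs ! i"
      by (metis in_set_conv_nth)
    then have i: "i < k" "i < length bs" "b = bs ! i"
      by simp_all
    have "card (out_nbrs (out_nbrs W beats v) beats b)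
        \<le> card (out_nbrs (out_nbrs S beats v) beats b)"
      using admissible_finite[OF assms(1)] W(1) by (intro card_mono) (auto simp: out_nbrs_def)
    also have "\<dots> \<le> i"
      using admissible_rank_bound[OF assms(1) bs i(2)] i(3) by simp
    also have "\<dots> = card (in_nbrs (set (take k bs)) beats (take k bs ! i))"
      using i bs \<open>S \<subseteq> V\<close> sorted_wrt_take[of beats bs k]
      by (intro card_in_nbrs_sorted_nth[OF tournament, symmetric])
        (auto simp: in_nbrs_def dest: in_set_takeD)
    finally show ?thesis
      using i W(4) by simp
  qed
  ultimately show ?thesis
    using W \<open>S \<subseteq> V\<close> unfolding admissible_def by blast
qed

lemma in_nbrs_round_schedule_winners:
  assumes "S \<subseteq> V" and "set bs = in_nbrs S beats v" and "length bs = 2 * k + length ks"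
    and "set ks \<subseteq> out_nbrs S beats v" and "set rest \<subseteq> out_nbrs S beats v"
  shows "in_nbrs (fst ` set (round_schedule v a k bs ks rest)) beats v = set (take k bs)"
proof -
  have "\<not> beats u v" if "u \<in> out_nbrs S beats v" for u
    using that assms(1) champion tournament_asym[OF tournament, of v u] by (auto simp: out_nbrs_def)
  moreover have "set ks \<union> fst ` set (pairs_of rest) \<subseteq> out_nbrs S beats v"
    using fst_pairs_of_subset[of rest] assms(4,5) by blast
  moreover have "set (take k bs) \<subseteq> in_nbrs S beats v"
    using set_take_subset[of k bs] assms(2) by blast
  moreover have "\<not> beats v v"
    using champion tournament_irrefl[OF tournament] by blast
  ultimately show ?thesis
    unfolding fst_round_schedule[OF assms(3)] by (auto simp: in_nbrs_def)
qed

lemma admissible_round_schedule: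
  assumes adm: "admissible (Suc m) S"
    and bs: "sorted_wrt beats bs" "distinct bs" "set bs = in_nbrs S beats v"
    and length_bs: "length bs = 2 * k + length ks"
    and ks: "distinct ks" "set ks \<subseteq> out_nbrs S beats v"
      "\<forall>j<length ks. beats (ks ! j) (bs ! (k + j))"
    and rem: "sorted_wrt beats (a # rest)" "distinct (a # rest)"
      "set (a # rest) = out_nbrs S beats v - set ks"
    and large: "4 \<le> card S \<Longrightarrow> k + 2 \<le> card (out_nbrs S beats v) + length ks"
  defines "ps \<equiv> round_schedule v a k bs ks rest"
  shows "distinct (map fst ps @ map snd ps)" and "\<forall>(w, l)\<in>set ps. beats w l"
    and "fst ` set ps \<union> snd ` set ps = S" and "admissible m (fst ` set ps)"
proof -
  define A where "A = out_nbrs S beats v"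
  have S: "S \<subseteq> V" "v \<in> S" "card S = 2 * 2 ^ m"
    using adm by (auto simp: admissible_def)
  have S_split: "S = insert v (A \<union> set bs)"
    using S(1,2) bs(3) champion tournament_total[OF tournament]
    by (auto simp: A_def out_nbrs_def in_nbrs_def)
  have card_S: "card S = Suc (card A + length bs)"
    using card_nbrs_in[OF tournament S(1,2)] bs(2,3) distinct_card by (metis A_def)
  have A_split: "A = set (a # rest) \<union> set ks" "set (a # rest) \<inter> set ks = {}"
    using rem(3) ks(2) by (auto simp: A_def)
  then have "card A = length (a # rest) + length ks"
    using card_Un_disjoint[OF finite_set finite_set] rem(2) ks(1) by (metis distinct_card)
  then have card_A: "card A = Suc (length rest + length ks)"
    by simp
  then have even_rest: "even (length rest)"
    using card_S S(3) length_bs by presburger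
  have players: "fst ` set ps \<union> snd ` set ps = S"
    using players_round_schedule[OF length_bs even_rest, of v a] A_split(1) S_split
    by (auto simp: ps_def)
  have length_ps: "2 * length ps = card S"
    using length_round_schedule[OF length_bs even_rest, of v a] card_S card_A
    by (simp add: ps_def)
  show distinct: "distinct (map fst ps @ map snd ps)"
    using players length_ps by (intro card_distinct) (simp add: image_Un)
  have "beats v a" "sorted_wrt beats rest"
    using rem(1,3) by (auto simp: out_nbrs_def)
  then show "\<forall>(w, l)\<in>set ps. beats w l"
    unfolding ps_def by (intro round_schedule_beats[OF length_bs _ bs(1) _ ks(3)])
  show "fst ` set ps \<union> snd ` set ps = S"
    by (fact players)
  have "in_nbrs (fst ` set ps) beats v = set (take k bs)"
    unfolding ps_def using S(1) bs(3) length_bs ks(2) rem(3)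
    by (intro in_nbrs_round_schedule_winners) auto
  moreover have card_W: "card (fst ` set ps) = 2 ^ m"
    using distinct distinct_card[of "map fst ps"] length_ps S(3) by simp
  moreover have "2 \<le> card (fst ` set ps) \<Longrightarrow> 3 * k + 3 \<le> 2 * card (fst ` set ps)"
    using card_W S(3) large card_S length_bs by (simp add: A_def)
  moreover have "fst ` set ps \<subseteq> S" "v \<in> fst ` set ps"
    using players by (auto simp: ps_def round_schedule_def)
  ultimately show "admissible m (fst ` set ps)"
    using admissible_winners[OF adm bs] length_bs by simp
qed

lemma admissible_round:
  assumes "admissible (Suc m) S"
  obtains ps where "distinct (map fst ps @ map snd ps)" "\<forall>(w, l)\<in>set ps. beats w l"
    "fst ` set ps \<union> snd ` set ps = S" "admissible m (fst ` set ps)"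
proof -
  define A where "A = out_nbrs S beats v"
  have S: "S \<subseteq> V" "v \<in> S" "card S = 2 * 2 ^ m" "card S \<le> 3 * card A"
    using assms by (auto simp: admissible_def A_def)
  obtain bs where bs: "sorted_wrt beats bs" "distinct bs" "set bs = in_nbrs S beats v"
    using acyclic_sorted_list_exists[OF tournament _ acyclic_in_nbrs[OF S(1)]] S(1)
    by (auto simp: in_nbrs_def)
  have card_S: "card S = Suc (card A + length bs)"
    using card_nbrs_in[OF tournament S(1,2)] bs(2,3) distinct_card by (metis A_def)
  then have size: "1 + card A + length bs = 2 * 2 ^ m"
    using S(3) by simp
  have "even (1 + card A + length bs)"
    unfolding size by simp
  moreover have "1 + card A + length bs \<le> 3 * card A"
    using size S(3,4) by simp
  ultimately obtain k x where kx: "length bs = 2 * k + x" "x < card A" "k + x \<le> card A"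
      "4 \<le> 1 + card A + length bs \<longrightarrow> k + 2 \<le> card A + x"
    using round_parameters_exist by blast
  obtain ks where ks: "length ks = x" "distinct ks" "set ks \<subseteq> A"
      "\<forall>j<x. beats (ks ! j) (bs ! (k + j))"
    using admissible_matching[OF assms bs, of k x] kx by (auto simp: A_def)
  have "acyclic (induced_arcs beats (A - set ks))"
    using acyclic_out_nbrs[OF S(1)] by (rule acyclic_subset) (auto simp: A_def induced_arcs_def)
  moreover have "A - set ks \<subseteq> V"
    using S(1) by (auto simp: A_def out_nbrs_def)
  ultimately obtain rem where rem: "sorted_wrt beats rem" "distinct rem" "set rem = A - set ks"
    using acyclic_sorted_list_exists[OF tournament] by blast
  have "length rem = card A - x"
    using rem(2,3) distinct_card card_Diff_subset[OF finite_set ks(3)] ks(1,2) by metis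
  then obtain a rest where rem_eq: "rem = a # rest"
    using kx(2) by (cases rem) auto
  have length_bs: "length bs = 2 * k + length ks"
    using kx(1) ks(1) by simp
  have ks': "set ks \<subseteq> out_nbrs S beats v" "\<forall>j<length ks. beats (ks ! j) (bs ! (k + j))"
    using ks by (simp_all add: A_def)
  have a_rest: "sorted_wrt beats (a # rest)" "distinct (a # rest)"
    "set (a # rest) = out_nbrs S beats v - set ks"
    using rem unfolding rem_eq A_def by simp_all
  have "4 \<le> card S \<Longrightarrow> k + 2 \<le> card (out_nbrs S beats v) + length ks"
    using kx(4) card_S ks(1) by (simp add: A_def)
  from admissible_round_schedule[OF assms bs length_bs ks(2) ks' a_rest this] show ?thesis
    by (rule that)
qed

lemma admissible_knockout_winnable: "admissible m S \<Longrightarrow> knockout_winnable beats m S v"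
proof (induction m arbitrary: S)
  case 0
  then have "S = {v}"
    by (metis admissible_def card_1_singletonE power_0 singletonD)
  then show ?case
    by (auto simp: knockout_winnable_def intro!: exI[of _ "[v]"])
next
  case (Suc m)
  obtain ps where ps: "distinct (map fst ps @ map snd ps)" "\<forall>(w, l)\<in>set ps. beats w l"
    and S: "fst ` set ps \<union> snd ` set ps = S" and winners: "admissible m (fst ` set ps)"
    using admissible_round[OF Suc.prems] by blast
  from winners have "knockout_winnable beats m (fst ` set ps) v"
    by (rule Suc.IH)
  with ps show ?case
    unfolding S[symmetric] by (rule knockout_winnable_round)
qed

lemma out_deg_in_nbr_lower_bound:
  assumes "b \<in> in_nbrs V beats v"
  shows "Suc (card (out_nbrs (out_nbrs V beats v) beats b)
      + card (out_nbrs (in_nbrs V beats v) beats b)) \<le> out_deg V beats b"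
proof -
  let ?X = "out_nbrs (out_nbrs V beats v) beats b" and ?Y = "out_nbrs (in_nbrs V beats v) beats b"
  have "finite ?X" "finite ?Y"
    using tournament_finite[OF tournament] by (auto simp: out_nbrs_def in_nbrs_def)
  moreover have "?X \<inter> ?Y = {}" "v \<notin> ?X \<union> ?Y"
    using champion tournament_irrefl[OF tournament] tournament_asym[OF tournament, of v]
    by (auto simp: out_nbrs_def in_nbrs_def)
  ultimately have "card (insert v (?X \<union> ?Y)) = Suc (card ?X + card ?Y)"
    by (simp add: card_Un_disjoint)
  moreover have "insert v (?X \<union> ?Y) \<subseteq> out_nbrs V beats b"
    using assms champion by (auto simp: out_nbrs_def in_nbrs_def)
  then have "card (insert v (?X \<union> ?Y)) \<le> out_deg V beats b"
    unfolding out_deg_def using tournament_finite[OF tournament]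
    by (intro card_mono) (auto simp: out_nbrs_def)
  ultimately show ?thesis
    by simp
qed

lemma admissible_start:
  assumes "card V = 2 ^ k" and "card V \<le> 3 * card (out_nbrs V beats v)"
    and "\<forall>b\<in>in_nbrs V beats v. out_deg V beats b \<le> card (in_nbrs V beats v)"
  shows "admissible k V"
proof -
  let ?A = "out_nbrs V beats v" and ?B = "in_nbrs V beats v"
  have "card (out_nbrs ?A beats b) \<le> card (in_nbrs ?B beats b)" if b: "b \<in> ?B" for b
  proof -
    have "card ?B = Suc (card (out_nbrs ?B beats b) + card (in_nbrs ?B beats b))"
      using b by (intro card_nbrs_in[OF tournament]) (auto simp: in_nbrs_def)
    then show ?thesis
      using out_deg_in_nbr_lower_bound[OF b] assms(3) b by fastforce
  qed
  then show ?thesis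
    using assms(1,2) champion unfolding admissible_def by simp
qed

end

theorem theorem5:
  fixes V :: "'a set" and beats :: "'a \<Rightarrow> 'a \<Rightarrow> bool" and v :: 'a
  assumes "tournament V beats"
    and "\<exists>k. card V = 2 ^ k"
    and "v \<in> V"
    and "neighbor_acyclic V beats v"
    and "\<forall>u\<in>V. \<not> is_source V beats u"
    and "3 * card (out_nbrs V beats v) \<ge> card V"
    and "\<forall>b\<in>in_nbrs V beats v.
           real (out_deg V beats b)
             \<le> real (card (in_nbrs V beats v)) / real (card (out_nbrs V beats v))
               * real (out_deg V beats v)"
  shows "yes_instance V beats v"
proof -
  interpret neighbor_acyclic_instance V beats v
    using assms(1,3,4) by (rule neighbor_acyclic_instance.intro)
  obtain k where k: "card V = 2 ^ k"
    using assms(2) by blast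
  have "0 < card V"
    using tournament_finite[OF tournament] champion card_gt_0_iff by blast
  then have "0 < card (out_nbrs V beats v)"
    using assms(6) by linarith
  then have "\<forall>b\<in>in_nbrs V beats v. out_deg V beats b \<le> card (in_nbrs V beats v)"
    using assms(7) by (simp add: out_deg_def)
  then have "admissible k V"
    using admissible_start k assms(6) by blast
  then have "knockout_winnable beats k V v"
    by (rule admissible_knockout_winnable)
  then show ?thesis
    unfolding yes_instance_iff_knockout_winnable by blast
qed

end
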